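(* Let $X,Y$ be Banach spaces, $\bar x\in X$, and let $A\in\mathcal L(X,Y)$ be surjective. For every $h>0$ let $X_h\subset X$, $Y_h\subset Y$ be closed subspaces (with the induced norms), let $F_h\colon X_h\to Y_h$ be continuous and let $\tilde x_h\in X_h$. Assume: (i) $\epsilon_h:=\|F_h(\tilde x_h)\|_Y+\|\bar x-\tilde x_h\|_X\to0$ as $h\to0$; (ii) there exist $A_h\in\mathcal L(X_h,Y_h)$, $R>0$ and a function $c\colon(0,\infty)\times(0,\infty)\to[0,\infty)$, nondecreasing in each variable with $\lim_{(h,r)\to0}c(h,r)=0$, such that $\|F_h(x)-F_h(y)-A_h(x-y)\|_Y\le c(h,r)\|x-y\|_X$ for all $x,y\in B_{X_h}(\tilde x_h,r)$, all $0<r<R$ and all $h>0$; (iii) there exist $\widehat A_h\in\mathcal L(X,Y)$ with $\widehat A_h(X_h)\subset Y_h$ and $\widehat A_h^{-1}(Y_h)\subset X_h$, such that $\lim_{h\to0}\|A-\widehat A_h\|_{\mathcal L(X,Y)}=0$ and $\lim_{h\to0}\|A_h-\widehat A_h\|_{\mathcal L(X_h,Y_h)}=0$. Then there is $h_0>0$ such that for every $0<h\le h_0$ there exists $\bar x_h\in X_h$ with $F_h(\bar x_h)=0$, $$\|\bar x-\bar x_h\|_X\le\Big(1+\frac{2}{\mathfrak C_{X,Y}(A)}\Big)\|\bar x-\tilde x_h\|_X+\frac{2}{\mathfrak C_{X,Y}(A)}\|F_h(\tilde x_h)\|_Y,$$ and $\operatorname{sur}_{X_h,Y_h}(F_h;\bar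 x_h)\ge\frac12\mathfrak C_{X,Y}(A)$. Moreover, if $A$ is an isomorphism, there exist $0<h_1\le h_0$ and $r_1>0$ such that for every $0<h\le h_1$, $F_h$ is strongly metrically regular near $\bar x_h$ and $\bar x_h$ is the unique element of $B_X(\bar x,r_1)\cap X_h$ with $F_h(\bar x_h)=0$.
   Context: $B_X(x,r)$ denotes a closed ball. For $T\in\mathcal L(X,Y)$, the Banach constant $\mathfrak C_{X,Y}(T)$ is the supremum of all $\kappa>0$ with $B_Y(0,\kappa)\subset T(B_X(0,1))$ if $T$ is surjective, and $\mathfrak C_{X,Y}(T)=0$ otherwise. A continuous map $F\colon X\to Y$ is metrically regular near $\bar x$ if there exist $\kappa,R>0$ with $B_Y(F(x),\kappa r)\cap B_Y(F(\bar x),R)\subset F(B_X(x,r))$ for all $0<r\le R$, $x\in B_X(\bar x,R)$; $\operatorname{sur}_{X,Y}(F;\bar x)$ is the supremum of such $\kappa$. $F$ is strongly metrically regular near $\bar x$ if it is metrically regular near $\bar x$ and there are neighborhoods $U$ of $\bar x$ and $V$ of $F(\bar x)$ such that $F^{-1}(y)\cap U$ is a single point for every $y\in V$. For maps $X_h\to Y_h$ the same notions are used with $X_h,Y_h$ in place of $X,Y$. *)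

theory Defs
  imports "HOL-Analysis.Analysis" "HOL-Library.Extended_Real"
begin

text \<open>Banach constant of a bounded linear map between whole spaces (value in ereal,
  so that it is \<infinity> e.g. for a trivial target space).\<close>
definition banach_const :: "('a::real_normed_vector \<Rightarrow> 'b::real_normed_vector) \<Rightarrow> ereal" where
  "banach_const T = (if surj T
     then Sup (ereal ` {\<kappa>. \<kappa> > 0 \<and> cball 0 \<kappa> \<subseteq> T ` cball 0 1}) else 0)"

definition metric_reg_with :: "'a::real_normed_vector set \<Rightarrow> 'b::real_normed_vector set
     \<Rightarrow> ('a \<Rightarrow> 'b) \<Rightarrow> 'a \<Rightarrow> real \<Rightarrow> bool" where
  "metric_reg_with X Y F xb \<kappa> \<longleftrightarrow> \<kappa> > 0 \<and> (\<exists>R>0. \<forall>r x. 0 < r \<and> r \<le> R \<and> x \<in> X \<inter> cball xb R \<longrightarrow>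
      Y \<inter> cball (F x) (\<kappa> * r) \<inter> cball (F xb) R \<subseteq> F ` (X \<inter> cball x r))"

definition metrically_regular_on :: "'a::real_normed_vector set \<Rightarrow> 'b::real_normed_vector set
     \<Rightarrow> ('a \<Rightarrow> 'b) \<Rightarrow> 'a \<Rightarrow> bool" where
  "metrically_regular_on X Y F xb \<longleftrightarrow> (\<exists>\<kappa>. metric_reg_with X Y F xb \<kappa>)"

definition sur_on :: "'a::real_normed_vector set \<Rightarrow> 'b::real_normed_vector set
     \<Rightarrow> ('a \<Rightarrow> 'b) \<Rightarrow> 'a \<Rightarrow> ereal" where
  "sur_on X Y F xb = Sup (ereal ` {\<kappa>. metric_reg_with X Y F xb \<kappa>})"

definition strongly_metrically_regular_on :: "'a::real_normed_vector set \<Rightarrow> 'b::real_normed_vector set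
     \<Rightarrow> ('a \<Rightarrow> 'b) \<Rightarrow> 'a \<Rightarrow> bool" where
  "strongly_metrically_regular_on X Y F xb \<longleftrightarrow> metrically_regular_on X Y F xb \<and>
     (\<exists>U V. open U \<and> xb \<in> U \<and> open V \<and> F xb \<in> V \<and>
        (\<forall>y \<in> Y \<inter> V. \<exists>!x. x \<in> X \<inter> U \<and> F x = y))"

definition bounded_linear_on :: "'a::real_normed_vector set \<Rightarrow> 'b::real_normed_vector set
     \<Rightarrow> ('a \<Rightarrow> 'b) \<Rightarrow> bool" where
  "bounded_linear_on S T f \<longleftrightarrow> (\<forall>x\<in>S. f x \<in> T) \<and>
     (\<forall>x\<in>S. \<forall>y\<in>S. f (x + y) = f x + f y) \<and> (\<forall>c. \<forall>x\<in>S. f (c *\<^sub>R x) = c *\<^sub>R f x) \<and>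
     (\<exists>K. \<forall>x\<in>S. norm (f x) \<le> K * norm x)"

definition onorm_on :: "'a::real_normed_vector set \<Rightarrow> ('a \<Rightarrow> 'b::real_normed_vector) \<Rightarrow> real" where
  "onorm_on S f = Sup {norm (f x) | x. x \<in> S \<and> norm x \<le> 1}"

end

theory Submission
  imports Defs
begin

(* Everything rests on a Lyusternik-Graves iteration: if every z in YS is L u, up to a relative
   error theta, for some u in XS with kappa |u| <= |z|, and G - L is eps-Lipschitz near x0 with
   eps < kappa (1 - theta), then the Newton-type steps x_(k+1) = x_k + u_k with L u_k close to
   y - G x_k contract the residual by the factor theta + eps / kappa and converge to a solution of
   G x = y.

   With G = L = A and theta = 1/2 this upgrades the Baire-category approximate open mapping
   property of A to the open mapping theorem; with theta = 0 it shows that openness at rate kappa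
   survives a perturbation of norm delta at rate kappa - delta.  As A - Ahat_h -> 0 and
   Ahat_h^-1 (Y_h) lies in X_h, Ahat_h maps X_h onto Y_h at any rate below the Banach constant c of
   A, and F_h is close to Ahat_h near xt_h, so the iteration applied to F_h produces a zero of F_h
   and metric regularity at rate c / 2.  If A is bijective, Ahat_h is bounded below, which makes
   F_h injective near xt_h; this gives strong regularity and local uniqueness.  If Y = {0}, the
   Banach constant is infinite and xt_h itself is the zero. *)

section \<open>The Lyusternik-Graves iteration\<close>

lemma convergent_if_geometric_increments:
  fixes xs :: "nat \<Rightarrow> 'a::banach"
  assumes q: "0 \<le> q" "q < 1" and inc: "\<And>k. norm (xs (Suc k) - xs k) \<le> a * q ^ k"
  shows "convergent xs"
proof -
  have "summable (\<lambda>k. a * q ^ k)"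
    using q by (simp add: summable_geometric)
  then have "summable (\<lambda>k. xs (Suc k) - xs k)"
    by (rule summable_comparison_test'[OF _ inc])
  then have "convergent (\<lambda>k. xs 0 + (\<Sum>j<k. xs (Suc j) - xs j))"
    by (simp add: summable_iff_convergent convergent_add convergent_const)
  then show ?thesis by (simp add: sum_lessThan_telescope)
qed

lemma residual_contraction:
  fixes G L :: "'a::real_normed_vector \<Rightarrow> 'b::real_normed_vector"
  assumes est: "norm (G (x + u) - G x - L u) \<le> \<epsilon> * norm u"
    and step: "\<kappa> * norm u \<le> norm (y - G x)"
    and res: "norm (y - G x - L u) \<le> \<theta> * norm (y - G x)"
    and \<kappa>: "\<kappa> > 0" and \<epsilon>: "\<epsilon> \<ge> 0"
  shows "norm (y - G (x + u)) \<le> (\<theta> + \<epsilon> / \<kappa>) * norm (y - G x)"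
proof -
  have "y - G (x + u) = (y - G x - L u) - (G (x + u) - G x - L u)" by simp
  then have "norm (y - G (x + u)) \<le> norm (y - G x - L u) + norm (G (x + u) - G x - L u)"
    by (metis norm_triangle_ineq4)
  moreover have "\<epsilon> * norm u \<le> \<epsilon> * (norm (y - G x) / \<kappa>)"
    using step \<kappa> \<epsilon> by (intro mult_left_mono) (simp_all add: pos_le_divide_eq mult.commute)
  ultimately show ?thesis
    using est res by (simp add: distrib_right)
qed

lemma graves_iterates:
  fixes G L :: "'a::real_normed_vector \<Rightarrow> 'b::real_normed_vector"
  assumes XS: "subspace XS"
    and est: "\<forall>x\<in>XS \<inter> cball x0 r. \<forall>z\<in>XS \<inter> cball x0 r.
                norm (G x - G z - L (x - z)) \<le> \<epsilon> * norm (x - z)"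
    and s: "\<And>x. x \<in> XS \<inter> cball x0 r \<Longrightarrow> s x \<in> XS \<and>
              \<kappa> * norm (s x) \<le> norm (y - G x) \<and> norm (y - G x - L (s x)) \<le> \<theta> * norm (y - G x)"
    and \<kappa>: "\<kappa> > 0" and \<theta>: "\<theta> \<ge> 0" and \<epsilon>: "\<epsilon> \<ge> 0" and gap: "\<epsilon> < \<kappa> * (1 - \<theta>)"
    and x0: "x0 \<in> XS" and close: "norm (y - G x0) \<le> (\<kappa> * (1 - \<theta>) - \<epsilon>) * r"
  defines "xs k \<equiv> ((\<lambda>x. x + s x) ^^ k) x0"
  shows "xs k \<in> XS \<inter> cball x0 (norm (y - G x0) / (\<kappa> * (1 - \<theta>) - \<epsilon>)) \<and>
    norm (y - G (xs k)) \<le> (\<theta> + \<epsilon> / \<kappa>) ^ k * norm (y - G x0)"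
proof -
  define \<mu> q d where "\<mu> = \<kappa> * (1 - \<theta>) - \<epsilon>" and "q = \<theta> + \<epsilon> / \<kappa>" and "d = norm (y - G x0)"
  have q: "0 \<le> q" "q < 1" and \<mu>: "0 < \<mu>" "\<mu> = \<kappa> * (1 - q)" and "0 \<le> d"
    using \<kappa> \<theta> \<epsilon> gap by (auto simp: \<mu>_def q_def d_def field_simps)
  have "d / \<mu> \<le> r"
    using close \<mu> by (simp add: d_def \<mu>_def pos_divide_le_eq mult.commute)
  have in_ball: "x \<in> XS \<inter> cball x0 (d / \<mu>)" "x \<in> XS \<inter> cball x0 r"
    if "x \<in> XS" "norm (x - x0) \<le> d / \<mu> * (1 - q ^ n)" for x n
  proof -
    have "d / \<mu> * (1 - q ^ n) \<le> d / \<mu>"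
      using q(1) \<mu>(1) \<open>0 \<le> d\<close> by (intro mult_left_le) auto
    then show "x \<in> XS \<inter> cball x0 (d / \<mu>)" "x \<in> XS \<inter> cball x0 r"
      using that \<open>d / \<mu> \<le> r\<close> by (auto simp: dist_norm norm_minus_commute)
  qed
  have xs_Suc: "xs (Suc k) = xs k + s (xs k)" for k
    by (simp add: xs_def)
  have inv: "xs k \<in> XS \<and> norm (xs k - x0) \<le> d / \<mu> * (1 - q ^ k) \<and> norm (y - G (xs k)) \<le> q ^ k * d"
  proof (induction k)
    case 0
    show ?case by (simp add: xs_def x0 d_def)
  next
    case (Suc k)
    have xk: "xs k \<in> XS \<inter> cball x0 r"
      using Suc.IH in_ball(2) by blast
    note sk = s[OF xk]
    have xs_X: "xs (Suc k) \<in> XS"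
      using sk Suc.IH subspace_add[OF XS] by (simp add: xs_Suc)
    have "norm (s (xs k)) \<le> d / \<kappa> * q ^ k"
      using sk Suc.IH \<kappa> by (simp add: field_simps)
    also have "d / \<kappa> = d / \<mu> * (1 - q)"
      using \<mu> q \<kappa> by (simp add: \<mu>(2))
    finally have "norm (s (xs k)) \<le> d / \<mu> * (1 - q) * q ^ k" .
    then have "norm (xs (Suc k) - x0) \<le> d / \<mu> * (1 - q ^ k) + d / \<mu> * (1 - q) * q ^ k"
      using norm_triangle_ineq[of "xs k - x0" "s (xs k)"] Suc.IH by (simp add: xs_Suc algebra_simps)
    also have "\<dots> = d / \<mu> * (1 - q ^ Suc k)"
      by (simp add: algebra_simps diff_divide_distrib)
    finally have dist_Suc: "norm (xs (Suc k) - x0) \<le> d / \<mu> * (1 - q ^ Suc k)" .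
    have "norm (y - G (xs (Suc k))) \<le> q * norm (y - G (xs k))"
      unfolding q_def xs_Suc
    proof (rule residual_contraction[OF _ _ _ \<kappa> \<epsilon>])
      show "norm (G (xs k + s (xs k)) - G (xs k) - L (s (xs k))) \<le> \<epsilon> * norm (s (xs k))"
        using est xk in_ball(2)[OF xs_X dist_Suc] unfolding xs_Suc by (metis add_diff_cancel_left')
    qed (use sk in auto)
    also have "\<dots> \<le> q ^ Suc k * d"
      using mult_left_mono[of _ "q ^ k * d" q] Suc.IH q by (simp add: mult.assoc)
    finally show ?case
      using xs_X dist_Suc by simp
  qed
  then have "xs k \<in> XS \<inter> cball x0 (d / \<mu>)"
    using in_ball(1) by blast
  with inv show ?thesis
    by (simp add: \<mu>_def q_def d_def)
qed

lemma lyusternik_graves_iteration: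
  fixes G L :: "'a::banach \<Rightarrow> 'b::real_normed_vector"
  assumes XS: "subspace XS" "closed XS" and YS: "subspace YS"
    and GY: "G ` (XS \<inter> cball x0 r) \<subseteq> YS" and cont: "continuous_on (XS \<inter> cball x0 r) G"
    and approx_open: "\<forall>z\<in>YS. \<exists>u\<in>XS. \<kappa> * norm u \<le> norm z \<and> norm (z - L u) \<le> \<theta> * norm z"
    and est: "\<forall>x\<in>XS \<inter> cball x0 r. \<forall>z\<in>XS \<inter> cball x0 r.
                norm (G x - G z - L (x - z)) \<le> \<epsilon> * norm (x - z)"
    and \<kappa>: "\<kappa> > 0" and \<theta>: "\<theta> \<ge> 0" and \<epsilon>: "\<epsilon> \<ge> 0" and gap: "\<epsilon> < \<kappa> * (1 - \<theta>)"
    and x0: "x0 \<in> XS" and y: "y \<in> YS"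
    and close: "norm (y - G x0) \<le> (\<kappa> * (1 - \<theta>) - \<epsilon>) * r"
  shows "\<exists>x\<in>XS \<inter> cball x0 r. G x = y \<and> (\<kappa> * (1 - \<theta>) - \<epsilon>) * norm (x - x0) \<le> norm (y - G x0)"
proof -
  define \<mu> where "\<mu> = \<kappa> * (1 - \<theta>) - \<epsilon>"
  define q where "q = \<theta> + \<epsilon> / \<kappa>"
  define d where "d = norm (y - G x0)"
  have q: "0 \<le> q" "q < 1"
    using \<kappa> \<theta> \<epsilon> gap by (auto simp: q_def field_simps)
  have "\<exists>u\<in>XS. \<kappa> * norm u \<le> norm (y - G x) \<and> norm (y - G x - L u) \<le> \<theta> * norm (y - G x)"
    if "x \<in> XS \<inter> cball x0 r" for x
    using approx_open GY y subspace_diff[OF YS] that by blast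
  then obtain s where s: "\<And>x. x \<in> XS \<inter> cball x0 r \<Longrightarrow> s x \<in> XS \<and>
      \<kappa> * norm (s x) \<le> norm (y - G x) \<and> norm (y - G x - L (s x)) \<le> \<theta> * norm (y - G x)"
    by metis
  define xs where "xs k = ((\<lambda>x. x + s x) ^^ k) x0" for k
  have xs: "xs k \<in> XS \<inter> cball x0 (d / \<mu>)" "norm (y - G (xs k)) \<le> q ^ k * d" for k
    using graves_iterates[OF XS(1) est s \<kappa> \<theta> \<epsilon> gap x0 close, of k]
    unfolding xs_def d_def \<mu>_def q_def by auto
  have "d / \<mu> \<le> r"
    using close gap by (simp add: d_def \<mu>_def pos_divide_le_eq mult.commute)
  then have in_r: "XS \<inter> cball x0 (d / \<mu>) \<subseteq> XS \<inter> cball x0 r"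
    using subset_cball by blast
  have "norm (xs (Suc k) - xs k) \<le> d / \<kappa> * q ^ k" for k
    using xs[of k] s[of "xs k"] in_r \<kappa> by (auto simp: xs_def field_simps)
  then obtain l where lim: "xs \<longlonglongrightarrow> l"
    using convergent_if_geometric_increments[OF q] by (metis convergentD)
  have l_ball: "l \<in> XS \<inter> cball x0 (d / \<mu>)"
    using closed_sequentially[of "XS \<inter> cball x0 (d / \<mu>)"] XS(2) xs lim by blast
  have "(\<lambda>k. G (xs k)) \<longlonglongrightarrow> G l"
    using continuous_on_tendsto_compose[OF cont lim] l_ball xs in_r by (simp add: subset_iff)
  moreover have "(\<lambda>k. G (xs k)) \<longlonglongrightarrow> y"
  proof -
    have "(\<lambda>k. q ^ k * d) \<longlonglongrightarrow> 0"
      using q by (intro tendsto_mult_left_zero LIMSEQ_power_zero) auto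
    then have "(\<lambda>k. y - G (xs k)) \<longlonglongrightarrow> 0"
      by (rule Lim_null_comparison[rotated]) (use xs in auto)
    from tendsto_diff[OF tendsto_const this, of y] show ?thesis by simp
  qed
  ultimately have "G l = y"
    by (rule LIMSEQ_unique)
  moreover have "\<mu> * norm (l - x0) \<le> d"
    using l_ball gap by (simp add: \<mu>_def dist_norm norm_minus_commute pos_le_divide_eq mult.commute)
  ultimately show ?thesis
    using l_ball in_r by (auto simp: \<mu>_def d_def)
qed

section \<open>Linear openness and the open mapping theorem\<close>

definition open_at_rate :: "'a::real_normed_vector set \<Rightarrow> 'b::real_normed_vector set
    \<Rightarrow> ('a \<Rightarrow> 'b) \<Rightarrow> real \<Rightarrow> bool" where
  "open_at_rate X Y L \<kappa> \<longleftrightarrow> (\<forall>y\<in>Y. \<exists>x\<in>X. L x = y \<and> \<kappa> * norm x \<le> norm y)"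

lemma open_at_rate_mono: "open_at_rate X Y L \<kappa> \<Longrightarrow> \<kappa>' \<le> \<kappa> \<Longrightarrow> open_at_rate X Y L \<kappa>'"
  unfolding open_at_rate_def by (meson mult_right_mono norm_ge_zero order_trans)

lemma open_at_rate_restrict:
  "open_at_rate UNIV UNIV L \<kappa> \<Longrightarrow> L -` Y \<subseteq> X \<Longrightarrow> open_at_rate X Y L \<kappa>"
  unfolding open_at_rate_def by blast

lemma open_at_rate_lower_bound:
  assumes "open_at_rate UNIV UNIV L \<kappa>" "inj L"
  shows "\<kappa> * norm x \<le> norm (L x)"
  using assms unfolding open_at_rate_def by (metis UNIV_I injD)

lemma open_at_rate_perturbation:
  fixes A B :: "'a::banach \<Rightarrow> 'b::real_normed_vector"
  assumes A: "open_at_rate UNIV UNIV A \<kappa>" and B: "bounded_linear B"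
    and close: "\<And>w. norm (A w - B w) \<le> \<delta> * norm w" and \<delta>: "0 \<le> \<delta>" "\<delta> < \<kappa>"
  shows "open_at_rate UNIV UNIV B (\<kappa> - \<delta>)"
proof -
  interpret B: bounded_linear B by (rule B)
  have "\<exists>x\<in>UNIV \<inter> cball 0 (norm y / (\<kappa> - \<delta>)). B x = y \<and> (\<kappa> * (1 - 0) - \<delta>) * norm (x - 0) \<le> norm (y - B 0)"
    for y
  proof (rule lyusternik_graves_iteration[where YS = UNIV and L = A])
    show "continuous_on (UNIV \<inter> cball 0 (norm y / (\<kappa> - \<delta>))) B"
      using B.continuous_on[OF continuous_on_id] by simp
    show "\<forall>x\<in>UNIV \<inter> cball 0 (norm y / (\<kappa> - \<delta>)). \<forall>z\<in>UNIV \<inter> cball 0 (norm y / (\<kappa> - \<delta>)).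
        norm (B x - B z - A (x - z)) \<le> \<delta> * norm (x - z)"
      using close by (simp add: B.diff[symmetric] norm_minus_commute)
    show "\<forall>z\<in>UNIV. \<exists>u\<in>UNIV. \<kappa> * norm u \<le> norm z \<and> norm (z - A u) \<le> 0 * norm z"
      using A unfolding open_at_rate_def by auto
  qed (use \<delta> in auto)
  then show ?thesis
    unfolding open_at_rate_def by auto
qed

lemma norm_lower_bound_perturbation:
  assumes "\<kappa> * norm w \<le> norm (A w)" "norm (A w - B w) \<le> \<delta> * norm w"
  shows "(\<kappa> - \<delta>) * norm w \<le> norm (B w)"
  using assms norm_triangle_ineq2[of "A w" "B w"] by (simp add: left_diff_distrib)

lemma closure_image_cball_has_interior:
  fixes A :: "'a::real_normed_vector \<Rightarrow> 'b::banach"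
  assumes "surj A"
  shows "\<exists>N>0. \<exists>y0 e. e > 0 \<and> ball y0 e \<subseteq> closure (A ` cball 0 N)"
proof -
  define T where "T n = closure (A ` cball 0 (real (Suc n)))" for n
  have "y \<in> \<Union>(range T)" for y
  proof -
    obtain x where "y = A x"
      using \<open>surj A\<close> by (metis surj_def)
    moreover obtain n where "norm x \<le> real n"
      using real_arch_simple by blast
    ultimately have "y \<in> A ` cball 0 (real (Suc n))"
      by (intro image_eqI[of _ _ x]) auto
    then have "y \<in> T n"
      unfolding T_def by (rule closure_subset[THEN subsetD])
    then show ?thesis
      by (rule UnionI[OF rangeI])
  qed
  then have cover: "\<Union>(range T) = UNIV"
    by auto
  have "\<exists>n. interior (T n) \<noteq> {}"
  proof (rule ccontr)
    assume "\<nexists>n. interior (T n) \<noteq> {}"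
    then have "euclidean interior_of \<Union>(range T) = {}"
      by (intro Baire_category_alt) (auto simp: completely_metrizable_space_euclidean T_def)
    with cover show False
      by simp
  qed
  then obtain n where "interior (T n) \<noteq> {}" ..
  then obtain y0 e where "e > 0" "ball y0 e \<subseteq> T n"
    by (auto simp: mem_interior)
  then show ?thesis
    unfolding T_def by (intro exI[of _ "real (Suc n)"]) auto
qed

lemma approximate_open_mapping:
  fixes A :: "'a::real_normed_vector \<Rightarrow> 'b::banach"
  assumes lin: "bounded_linear A" and "surj A"
  shows "\<exists>\<kappa>>0. \<forall>y. \<exists>x. \<kappa> * norm x \<le> norm y \<and> norm (y - A x) \<le> 1/2 * norm y"
proof -
  interpret A: bounded_linear A by (rule lin)
  obtain N y0 e where N: "N > 0" and e: "e > 0" "ball y0 e \<subseteq> closure (A ` cball 0 N)"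
    using closure_image_cball_has_interior[OF \<open>surj A\<close>] by blast
  have near: "\<exists>x. norm x \<le> 2 * N \<and> norm (z - A x) < \<delta>" if "norm z < e" "\<delta> > 0" for z \<delta>
  proof -
    have "y0 + z \<in> closure (A ` cball 0 N)" "y0 \<in> closure (A ` cball 0 N)"
      using e that by (auto simp: dist_norm)
    then obtain w1 w2 where w: "w1 \<in> A ` cball 0 N" "w2 \<in> A ` cball 0 N"
      "dist w1 (y0 + z) < \<delta>/2" "dist w2 y0 < \<delta>/2"
      using \<open>\<delta> > 0\<close> half_gt_zero closure_approachable by metis
    then obtain x1 x2 where x: "norm x1 \<le> N" "norm x2 \<le> N" "w1 = A x1" "w2 = A x2"
      by auto
    then have "z - A (x1 - x2) = ((y0 + z) - w1) - (y0 - w2)"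
      by (simp add: A.diff algebra_simps)
    then have "norm (z - A (x1 - x2)) \<le> norm ((y0 + z) - w1) + norm (y0 - w2)"
      by (metis norm_triangle_ineq4)
    also have "\<dots> < \<delta>"
      using w by (simp add: dist_norm norm_minus_commute)
    finally have "norm (z - A (x1 - x2)) < \<delta>" .
    moreover have "norm (x1 - x2) \<le> 2 * N"
      using x norm_triangle_ineq4[of x1 x2] by linarith
    ultimately show ?thesis
      by blast
  qed
  define \<kappa> where "\<kappa> = e / (4 * N)"
  have "\<exists>x. \<kappa> * norm x \<le> norm y \<and> norm (y - A x) \<le> 1/2 * norm y" for y
  proof (cases "y = 0")
    case False
    define s where "s = 2 * norm y / e"
    have s: "s > 0" "norm ((1 / s) *\<^sub>R y) = e / 2"
      using False e by (auto simp: s_def)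
    then obtain x where x: "norm x \<le> 2 * N" "norm ((1 / s) *\<^sub>R y - A x) < e / 4"
      using near[of "(1 / s) *\<^sub>R y" "e / 4"] e by auto
    have "\<kappa> * norm (s *\<^sub>R x) \<le> \<kappa> * (s * (2 * N))"
      using x s e N by (intro mult_left_mono) (auto simp: \<kappa>_def)
    also have "\<dots> = norm y"
      using e N by (simp add: \<kappa>_def s_def field_simps)
    finally have "\<kappa> * norm (s *\<^sub>R x) \<le> norm y" .
    have "y - A (s *\<^sub>R x) = s *\<^sub>R ((1 / s) *\<^sub>R y - A x)"
      using s by (simp add: A.scaleR algebra_simps)
    then have "norm (y - A (s *\<^sub>R x)) \<le> s * (e / 4)"
      using x s by (simp add: mult_left_mono)
    also have "\<dots> = 1/2 * norm y"
      using e by (simp add: s_def)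
    finally show ?thesis
      using \<open>\<kappa> * norm (s *\<^sub>R x) \<le> norm y\<close> by blast
  qed (intro exI[of _ 0], simp)
  moreover have "\<kappa> > 0"
    using e N by (simp add: \<kappa>_def)
  ultimately show ?thesis by blast
qed

theorem open_mapping:
  fixes A :: "'a::banach \<Rightarrow> 'b::banach"
  assumes lin: "bounded_linear A" and "surj A"
  shows "\<exists>\<kappa>>0. open_at_rate UNIV UNIV A \<kappa>"
proof -
  interpret A: bounded_linear A by (rule lin)
  obtain \<kappa> where \<kappa>: "\<kappa> > 0"
    and approx: "\<forall>y. \<exists>x. \<kappa> * norm x \<le> norm y \<and> norm (y - A x) \<le> 1/2 * norm y"
    using approximate_open_mapping[OF lin \<open>surj A\<close>] by blast
  have "\<exists>x\<in>UNIV \<inter> cball 0 (2 * norm y / \<kappa>). A x = y \<and> (\<kappa> * (1 - 1/2) - 0) * norm (x - 0) \<le> norm (y - A 0)"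
    for y
  proof (rule lyusternik_graves_iteration[where YS = UNIV and L = A])
    show "continuous_on (UNIV \<inter> cball 0 (2 * norm y / \<kappa>)) A"
      using A.continuous_on[OF continuous_on_id] by simp
    show "norm (y - A 0) \<le> (\<kappa> * (1 - 1/2) - 0) * (2 * norm y / \<kappa>)"
      using \<kappa> by simp
  qed (use approx \<kappa> in \<open>auto simp: A.diff\<close>)
  then have "open_at_rate UNIV UNIV A (\<kappa> / 2)"
    unfolding open_at_rate_def by auto
  then show ?thesis
    using \<kappa> by (intro exI[of _ "\<kappa> / 2"]) auto
qed

section \<open>The Banach constant\<close>

lemma open_at_rate_iff_cball:
  fixes A :: "'a::real_normed_vector \<Rightarrow> 'b::real_normed_vector"
  assumes lin: "linear A" and \<kappa>: "\<kappa> > 0"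
  shows "open_at_rate UNIV UNIV A \<kappa> \<longleftrightarrow> cball 0 \<kappa> \<subseteq> A ` cball 0 1"
proof
  assume "open_at_rate UNIV UNIV A \<kappa>"
  then have "\<exists>x. A x = y \<and> norm x \<le> 1" if "norm y \<le> \<kappa>" for y
    using that \<kappa> unfolding open_at_rate_def by (metis UNIV_I mult_le_cancel_left_pos mult.right_neutral order_trans)
  then show "cball 0 \<kappa> \<subseteq> A ` cball 0 1"
    by force
next
  assume ball: "cball 0 \<kappa> \<subseteq> A ` cball 0 1"
  have "\<exists>x. A x = y \<and> \<kappa> * norm x \<le> norm y" for y
  proof (cases "y = 0")
    case True
    then show ?thesis
      using linear_0[OF lin] by (intro exI[of _ 0]) simp
  next
    case False
    have "(\<kappa> / norm y) *\<^sub>R y \<in> cball 0 \<kappa>"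
      using \<kappa> by simp
    then have "(\<kappa> / norm y) *\<^sub>R y \<in> A ` cball 0 1"
      using ball by blast
    then obtain x where x: "norm x \<le> 1" "A x = (\<kappa> / norm y) *\<^sub>R y"
      by (metis imageE mem_cball_0)
    have "A ((norm y / \<kappa>) *\<^sub>R x) = y"
      using x False \<kappa> by (simp add: linear_scale[OF lin])
    moreover have "\<kappa> * norm ((norm y / \<kappa>) *\<^sub>R x) \<le> norm y"
      using x \<kappa> by (simp add: mult_left_le)
    ultimately show ?thesis
      by blast
  qed
  then show "open_at_rate UNIV UNIV A \<kappa>"
    unfolding open_at_rate_def by blast
qed

lemma open_at_rate_below_banach_const:
  assumes "linear A" "surj A" "0 < \<kappa>" "ereal \<kappa> < banach_const A"
  shows "open_at_rate UNIV UNIV A \<kappa>"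
proof -
  obtain \<kappa>' where "\<kappa> < \<kappa>'" "\<kappa>' > 0" "cball 0 \<kappa>' \<subseteq> A ` cball 0 1"
    using assms(2,4) by (auto simp: banach_const_def less_Sup_iff)
  then show ?thesis
    using open_at_rate_iff_cball[OF assms(1)] open_at_rate_mono by (metis less_le)
qed

lemma banach_const_ge:
  assumes "linear A" "surj A" "0 < \<kappa>" "open_at_rate UNIV UNIV A \<kappa>"
  shows "ereal \<kappa> \<le> banach_const A"
  using assms open_at_rate_iff_cball[OF assms(1,3)]
  unfolding banach_const_def by (auto intro: Sup_upper)

lemma banach_const_le_onorm:
  fixes A :: "'a::real_normed_vector \<Rightarrow> 'b::real_normed_vector"
  assumes lin: "bounded_linear A" and "\<exists>y::'b. y \<noteq> 0"
  shows "banach_const A \<le> ereal (onorm A)"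
proof -
  obtain y0 :: 'b where y0: "y0 \<noteq> 0"
    using assms(2) by blast
  have "\<kappa> \<le> onorm A" if \<kappa>: "\<kappa> > 0" and ball: "cball 0 \<kappa> \<subseteq> A ` cball 0 1" for \<kappa>
  proof -
    have "(\<kappa> / norm y0) *\<^sub>R y0 \<in> cball 0 \<kappa>"
      using \<kappa> y0 by simp
    then have "(\<kappa> / norm y0) *\<^sub>R y0 \<in> A ` cball 0 1"
      using ball by blast
    then obtain x where x: "norm x \<le> 1" "A x = (\<kappa> / norm y0) *\<^sub>R y0"
      by (metis imageE mem_cball_0)
    then have "\<kappa> = norm (A x)"
      using \<kappa> y0 by simp
    also have "\<dots> \<le> onorm A * norm x"
      by (rule onorm[OF lin])
    also have "\<dots> \<le> onorm A"
      using x onorm_pos_le[OF lin] by (simp add: mult_left_le)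
    finally show ?thesis .
  qed
  then show ?thesis
    using onorm_pos_le[OF lin] unfolding banach_const_def by (auto intro!: Sup_least)
qed

lemma banach_const_finite:
  fixes A :: "'a::banach \<Rightarrow> 'b::banach"
  assumes lin: "bounded_linear A" and "surj A" and "\<exists>y::'b. y \<noteq> 0"
  obtains c0 where "0 < c0" "banach_const A = ereal c0"
proof -
  obtain \<kappa> where "\<kappa> > 0" "open_at_rate UNIV UNIV A \<kappa>"
    using open_mapping[OF assms(1,2)] by blast
  then have "ereal \<kappa> \<le> banach_const A"
    using banach_const_ge[OF bounded_linear.linear[OF lin] \<open>surj A\<close>] by blast
  moreover have "banach_const A \<le> ereal (onorm A)"
    using banach_const_le_onorm[OF lin assms(3)] .
  ultimately show ?thesis
    using \<open>\<kappa> > 0\<close> that by (cases "banach_const A") auto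
qed

section \<open>Trivial target space\<close>

lemma Sup_ereal_eq_infinity:
  assumes "{0<..} \<subseteq> S"
  shows "Sup (ereal ` S) = \<infinity>"
proof -
  have "\<exists>i\<in>S. ereal (real n) \<le> ereal i" for n :: nat
    using assms by (intro bexI[of _ "real n + 1"]) auto
  then show ?thesis
    by (rule SUP_PInfty)
qed

lemma banach_const_trivial_target:
  fixes A :: "'a::real_normed_vector \<Rightarrow> 'b::real_normed_vector"
  assumes "\<And>y::'b. y = 0"
  shows "banach_const A = \<infinity>"
proof -
  have onto: "y \<in> A ` cball 0 1" for y
    using assms[of y] assms[of "A 0"] by (intro image_eqI[of _ _ 0]) auto
  then have "surj A"
    by blast
  with onto show ?thesis
    unfolding banach_const_def by (simp add: Sup_ereal_eq_infinity subset_iff)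
qed

lemma metric_reg_with_trivial_target:
  fixes F :: "'a::real_normed_vector \<Rightarrow> 'b::real_normed_vector"
  assumes "\<And>y::'b. y = 0" "x \<in> X" "\<kappa> > 0"
  shows "metric_reg_with X Y F x \<kappa>"
  unfolding metric_reg_with_def
proof (intro conjI exI[of _ 1] allI impI subsetI)
  fix r :: real and z y
  assume "0 < r \<and> r \<le> 1 \<and> z \<in> X \<inter> cball x 1"
  then have "z \<in> X \<inter> cball z r" by simp
  moreover have "y = F z"
    using assms(1) by metis
  ultimately show "y \<in> F ` (X \<inter> cball z r)" by blast
qed (use assms in auto)

lemma sur_on_trivial_target:
  fixes F :: "'a::real_normed_vector \<Rightarrow> 'b::real_normed_vector"
  assumes "\<And>y::'b. y = 0" "x \<in> X"
  shows "sur_on X Y F x = \<infinity>"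
  unfolding sur_on_def using metric_reg_with_trivial_target[OF assms]
  by (intro Sup_ereal_eq_infinity) auto

lemma strongly_metrically_regular_on_trivial:
  fixes F :: "'a::real_normed_vector \<Rightarrow> 'b::real_normed_vector"
  assumes "\<And>x::'a. x = 0" "\<And>y::'b. y = 0" "x \<in> X"
  shows "strongly_metrically_regular_on X Y F x"
  unfolding strongly_metrically_regular_on_def metrically_regular_on_def
proof (intro conjI exI[of _ 1] exI[of _ UNIV] ballI)
  show "metric_reg_with X Y F x 1"
    using metric_reg_with_trivial_target[OF assms(2,3)] by simp
  fix y
  have "F x = y"
    using assms(2) by metis
  show "\<exists>!z. z \<in> X \<inter> UNIV \<and> F z = y"
  proof (rule ex1I[of _ x])
    show "x \<in> X \<inter> UNIV \<and> F x = y"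
      using assms(3) \<open>F x = y\<close> by simp
    show "z = x" if "z \<in> X \<inter> UNIV \<and> F z = y" for z
      using assms(1)[of z] assms(1)[of x] by simp
  qed
qed auto

lemma trivial_target_estimates:
  fixes A F :: "'a::real_normed_vector \<Rightarrow> 'b::real_normed_vector"
  assumes triv: "\<And>y::'b. y = 0" and x: "x \<in> X"
  shows "F x = 0" "banach_const A / 2 \<le> sur_on X Y F x"
    "ereal (norm (xbar - x)) \<le> (1 + 2 / banach_const A) * ereal (norm (xbar - x))
       + (2 / banach_const A) * ereal (norm (F x))"
proof -
  show "F x = 0"
    by (rule triv)
  show "banach_const A / 2 \<le> sur_on X Y F x"
    using sur_on_trivial_target[OF triv x] by simp
  show "ereal (norm (xbar - x)) \<le> (1 + 2 / banach_const A) * ereal (norm (xbar - x))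
       + (2 / banach_const A) * ereal (norm (F x))"
    by (simp add: banach_const_trivial_target[OF triv])
qed

lemma trivial_target_strongly_regular:
  fixes A F :: "'a::real_normed_vector \<Rightarrow> 'b::real_normed_vector"
  assumes "bij A" and triv: "\<And>y::'b. y = 0" and x: "x \<in> X" and "0 \<le> r"
  shows "strongly_metrically_regular_on X Y F x \<and> x \<in> cball xbar r \<and>
    (\<forall>z\<in>cball xbar r \<inter> X. F z = 0 \<longrightarrow> z = x)"
proof -
  have triv_dom: "\<And>z::'a. z = 0"
    using triv \<open>bij A\<close> by (metis bij_def injD)
  have "x = xbar"
    using triv_dom[of x] triv_dom[of xbar] by simp
  then have "x \<in> cball xbar r"
    using \<open>0 \<le> r\<close> by simp
  moreover have "z = x" for z :: 'a
    using triv_dom[of z] triv_dom[of x] by simp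
  ultimately show ?thesis
    using strongly_metrically_regular_on_trivial[OF triv_dom triv x] by blast
qed

section \<open>Regularity of a perturbed linearization\<close>

lemma cball_subset_cball_triangle:
  fixes x y :: "'a::metric_space"
  assumes "dist x y + \<rho> \<le> r"
  shows "cball x \<rho> \<subseteq> cball y r"
proof
  fix v assume "v \<in> cball x \<rho>"
  then show "v \<in> cball y r"
    using dist_triangle[of y v x] assms by (simp add: dist_commute)
qed

lemma sur_on_ge: "metric_reg_with X Y F x \<kappa> \<Longrightarrow> ereal \<kappa> \<le> sur_on X Y F x"
  unfolding sur_on_def by (rule Sup_upper) simp

locale graves_setting =
  fixes X :: "'a::banach set" and Y :: "'b::real_normed_vector set"
    and F L :: "'a \<Rightarrow> 'b" and x0 :: 'a and r \<kappa> \<epsilon> :: real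
  assumes subspace_X: "subspace X" and closed_X: "closed X" and subspace_Y: "subspace Y"
    and continuous_F: "continuous_on X F" and F_into: "F ` X \<subseteq> Y" and center: "x0 \<in> X"
    and L_open: "open_at_rate X Y L \<kappa>"
    and linearization: "\<And>x z. x \<in> X \<inter> cball x0 r \<Longrightarrow> z \<in> X \<inter> cball x0 r \<Longrightarrow>
          norm (F x - F z - L (x - z)) \<le> \<epsilon> * norm (x - z)"
    and r_pos: "0 < r" and eps_nonneg: "0 \<le> \<epsilon>" and eps_less: "\<epsilon> < \<kappa>"
begin

lemma local_surjectivity:
  assumes x: "x \<in> X" and ball: "cball x \<rho> \<subseteq> cball x0 r" and y: "y \<in> Y"
    and close: "norm (y - F x) \<le> (\<kappa> - \<epsilon>) * \<rho>"
  shows "\<exists>z\<in>X \<inter> cball x \<rho>. F z = y \<and> (\<kappa> - \<epsilon>) * norm (z - x) \<le> norm (y - F x)"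
proof -
  have "\<exists>z\<in>X \<inter> cball x \<rho>. F z = y \<and> (\<kappa> * (1 - 0) - \<epsilon>) * norm (z - x) \<le> norm (y - F x)"
  proof (rule lyusternik_graves_iteration[where YS = Y and L = L])
    show "continuous_on (X \<inter> cball x \<rho>) F"
      using continuous_F by (rule continuous_on_subset) blast
    show "\<forall>z\<in>Y. \<exists>u\<in>X. \<kappa> * norm u \<le> norm z \<and> norm (z - L u) \<le> 0 * norm z"
      using L_open unfolding open_at_rate_def by auto
    show "\<forall>v\<in>X \<inter> cball x \<rho>. \<forall>w\<in>X \<inter> cball x \<rho>. norm (F v - F w - L (v - w)) \<le> \<epsilon> * norm (v - w)"
      using linearization ball by blast
  qed (use subspace_X closed_X subspace_Y F_into eps_nonneg eps_less x y close in auto)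
  then show ?thesis
    by simp
qed

lemma zero_near_center:
  assumes "norm (F x0) \<le> (\<kappa> - \<epsilon>) * r"
  shows "\<exists>xb\<in>X. F xb = 0 \<and> (\<kappa> - \<epsilon>) * norm (xb - x0) \<le> norm (F x0)"
  using local_surjectivity[OF center order_refl subspace_0[OF subspace_Y]] assms by auto

lemma metric_reg_near_center:
  assumes xb: "xb \<in> X" "norm (xb - x0) \<le> r / 4"
  shows "metric_reg_with X Y F xb (\<kappa> - \<epsilon>)"
  unfolding metric_reg_with_def
proof (intro conjI exI[of _ "r / 4"] allI impI subsetI)
  fix \<rho> x y
  assume x: "0 < \<rho> \<and> \<rho> \<le> r / 4 \<and> x \<in> X \<inter> cball xb (r / 4)"
    and y: "y \<in> Y \<inter> cball (F x) ((\<kappa> - \<epsilon>) * \<rho>) \<inter> cball (F xb) (r / 4)"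
  have "norm (x - x0) \<le> norm (x - xb) + norm (xb - x0)"
    using norm_triangle_ineq[of "x - xb" "xb - x0"] by simp
  then have "cball x \<rho> \<subseteq> cball x0 r"
    using x xb by (intro cball_subset_cball_triangle) (auto simp: dist_norm norm_minus_commute)
  then show "y \<in> F ` (X \<inter> cball x \<rho>)"
    using local_surjectivity[of x \<rho> y] x y by (force simp: dist_norm norm_minus_commute)
qed (use r_pos eps_less in auto)

lemma inj_on_center_ball:
  assumes lower: "\<forall>w\<in>X. \<kappa> * norm w \<le> norm (L w)"
  shows "inj_on F (X \<inter> cball x0 r)"
proof (rule inj_onI)
  fix x z assume x: "x \<in> X \<inter> cball x0 r" and z: "z \<in> X \<inter> cball x0 r" and "F x = F z"
  then have "\<kappa> * norm (x - z) \<le> \<epsilon> * norm (x - z)"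
    using bspec[OF lower, of "x - z"] linearization[OF x z] subspace_diff[OF subspace_X] by force
  then have "(\<kappa> - \<epsilon>) * norm (x - z) \<le> 0"
    by (simp add: left_diff_distrib)
  then show "x = z"
    using eps_less by (simp add: mult_le_0_iff)
qed

lemma strongly_metrically_regular_near_center:
  assumes lower: "\<forall>w\<in>X. \<kappa> * norm w \<le> norm (L w)"
    and xb: "xb \<in> X" "norm (xb - x0) \<le> r / 4"
  shows "strongly_metrically_regular_on X Y F xb"
  unfolding strongly_metrically_regular_on_def metrically_regular_on_def
proof (intro conjI exI[of _ "\<kappa> - \<epsilon>"] exI[of _ "ball xb (r / 4)"]
    exI[of _ "ball (F xb) ((\<kappa> - \<epsilon>) * (r / 4))"] ballI)
  show "metric_reg_with X Y F xb (\<kappa> - \<epsilon>)"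
    using metric_reg_near_center[OF xb] .
  have near: "cball xb (r / 4) \<subseteq> cball x0 r"
    using xb r_pos by (intro cball_subset_cball_triangle) (simp add: dist_norm norm_minus_commute)
  fix y assume y: "y \<in> Y \<inter> ball (F xb) ((\<kappa> - \<epsilon>) * (r / 4))"
  define \<rho> where "\<rho> = norm (y - F xb) / (\<kappa> - \<epsilon>)"
  have \<rho>: "\<rho> < r / 4" "norm (y - F xb) \<le> (\<kappa> - \<epsilon>) * \<rho>"
    using y eps_less by (auto simp: \<rho>_def dist_norm norm_minus_commute field_simps)
  then have "cball xb \<rho> \<subseteq> cball x0 r"
    using near subset_cball[of \<rho> "r / 4"] by auto
  then obtain x where x: "x \<in> X \<inter> cball xb \<rho>" "F x = y"
    using local_surjectivity[OF xb(1) _ _ \<rho>(2)] y by blast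
  then have "x \<in> X \<inter> ball xb (r / 4)"
    using \<rho>(1) by auto
  moreover have "X \<inter> ball xb (r / 4) \<subseteq> X \<inter> cball x0 r"
    using near ball_subset_cball by blast
  ultimately show "\<exists>!x. x \<in> X \<inter> ball xb (r / 4) \<and> F x = y"
    using inj_on_center_ball lower x(2) by (metis inj_onD subsetD)
qed (use r_pos eps_less in auto)

lemma unique_zero_near_center:
  assumes lower: "\<forall>w\<in>X. \<kappa> * norm w \<le> norm (L w)"
    and xb: "xb \<in> X" "F xb = 0" "norm (xb - x0) \<le> r / 4" and xbar: "norm (xbar - x0) \<le> r / 4"
  shows "strongly_metrically_regular_on X Y F xb \<and> (\<forall>x\<in>cball xbar (r / 4) \<inter> X. F x = 0 \<longrightarrow> x = xb)"
proof (intro conjI ballI impI)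
  show "strongly_metrically_regular_on X Y F xb"
    using strongly_metrically_regular_near_center lower xb by blast
  fix x assume x: "x \<in> cball xbar (r / 4) \<inter> X" "F x = 0"
  have "norm (x - x0) \<le> norm (x - xbar) + norm (xbar - x0)"
    using norm_triangle_ineq[of "x - xbar" "xbar - x0"] by simp
  then have "x \<in> X \<inter> cball x0 r" "xb \<in> X \<inter> cball x0 r"
    using x xb xbar r_pos by (auto simp: dist_norm norm_minus_commute)
  then show "x = xb"
    using inj_on_center_ball lower x(2) xb(2) by (metis inj_onD)
qed

lemma approximate_zero:
  assumes c0: "0 < c0" "c0 / 2 \<le> \<kappa> - \<epsilon>"
    and close: "(1 + 2 / c0) * (norm (F x0) + norm (xbar - x0)) \<le> r / 4"
  shows "\<exists>xb. xb \<in> X \<and> F xb = 0 \<and>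
    norm (xbar - xb) \<le> (1 + 2 / c0) * norm (xbar - x0) + 2 / c0 * norm (F x0) \<and>
    ereal (c0 / 2) \<le> sur_on X Y F xb \<and> xb \<in> cball xbar (r / 4) \<and>
    ((\<forall>w\<in>X. \<kappa> * norm w \<le> norm (L w)) \<longrightarrow>
       strongly_metrically_regular_on X Y F xb \<and> (\<forall>x\<in>cball xbar (r / 4) \<inter> X. F x = 0 \<longrightarrow> x = xb))"
proof -
  define e0 e1 where "e0 = norm (F x0)" and "e1 = norm (xbar - x0)"
  have e_nonneg: "0 \<le> e0" "0 \<le> e1" "0 \<le> 2 / c0 * e0" "0 \<le> 2 / c0 * e1"
    using c0 by (simp_all add: e0_def e1_def)
  moreover have "(1 + 2 / c0) * (e0 + e1) = e0 + e1 + 2 / c0 * e0 + 2 / c0 * e1"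
    by (simp add: algebra_simps add_divide_distrib)
  ultimately have e0_le: "2 / c0 * e0 \<le> r / 4" and e1_le: "e1 \<le> r / 4"
    and sum_le: "e1 + 2 / c0 * e0 \<le> r / 4"
    using close unfolding e0_def[symmetric] e1_def[symmetric] by linarith+
  have "e0 \<le> c0 / 2 * r"
    using e0_le c0 r_pos e_nonneg by (simp add: field_simps)
  also have "\<dots> \<le> (\<kappa> - \<epsilon>) * r"
    using c0(2) r_pos by (intro mult_right_mono) auto
  finally obtain xb where xb: "xb \<in> X" "F xb = 0" "(\<kappa> - \<epsilon>) * norm (xb - x0) \<le> e0"
    using zero_near_center by (auto simp: e0_def)
  then have "c0 / 2 * norm (xb - x0) \<le> e0"
    using mult_right_mono[OF c0(2) norm_ge_zero, of "xb - x0"] by linarith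
  then have dist_xb: "norm (xb - x0) \<le> 2 / c0 * e0"
    using c0 by (simp add: field_simps)
  have dist_xbar: "norm (xbar - xb) \<le> e1 + 2 / c0 * e0"
    using norm_triangle_ineq[of "xbar - x0" "x0 - xb"] dist_xb by (simp add: e1_def norm_minus_commute)
  have "metric_reg_with X Y F xb (\<kappa> - \<epsilon>)"
    by (rule metric_reg_near_center[OF xb(1)]) (use dist_xb e0_le in linarith)
  then have "ereal (c0 / 2) \<le> sur_on X Y F xb"
    using sur_on_ge c0(2) order_trans ereal_less_eq(3) by metis
  moreover have "xb \<in> cball xbar (r / 4)"
    using dist_xbar sum_le by (simp add: dist_norm)
  moreover have "norm (xbar - xb) \<le> (1 + 2 / c0) * e1 + 2 / c0 * e0"
    using dist_xbar e_nonneg by (simp add: distrib_right)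
  ultimately show ?thesis
    using xb unique_zero_near_center dist_xb e0_le e1_le unfolding e0_def e1_def by auto
qed

end

section \<open>The discretized problems\<close>

lemma bounded_linear_on_diff:
  assumes f: "bounded_linear_on S T f" and g: "bounded_linear g" "g ` S \<subseteq> T" and T: "subspace T"
  shows "bounded_linear_on S T (\<lambda>x. f x - g x)"
proof -
  interpret g: bounded_linear g by (rule g(1))
  obtain K where K: "\<forall>x\<in>S. norm (f x) \<le> K * norm x"
    using f unfolding bounded_linear_on_def by blast
  have "norm (f x - g x) \<le> (K + onorm g) * norm x" if "x \<in> S" for x
  proof -
    have "norm (f x) \<le> K * norm x"
      using K that by blast
    then show ?thesis
      using norm_triangle_ineq4[of "f x" "g x"] onorm[OF g(1), of x] by (simp add: distrib_right)
  qed
  then show ?thesis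
    using f g T unfolding bounded_linear_on_def
    by (auto simp: g.add g.scaleR subspace_diff scaleR_diff_right intro!: exI[of _ "K + onorm g"])
qed

lemma
  assumes S: "subspace S" and f: "bounded_linear_on S T f"
  shows norm_le_onorm_on: "x \<in> S \<Longrightarrow> norm (f x) \<le> onorm_on S f * norm x"
    and onorm_on_nonneg: "0 \<le> onorm_on S f"
proof -
  define M where "M = {norm (f x) | x. x \<in> S \<and> norm x \<le> 1}"
  obtain K where K: "\<forall>x\<in>S. norm (f x) \<le> K * norm x"
    using f unfolding bounded_linear_on_def by blast
  have "m \<le> \<bar>K\<bar>" if "m \<in> M" for m
  proof -
    obtain x where x: "x \<in> S" "norm x \<le> 1" "m = norm (f x)"
      using \<open>m \<in> M\<close> by (auto simp: M_def)
    then have "K * norm x \<le> \<bar>K\<bar> * 1"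
      by (metis abs_ge_self abs_ge_zero mult_mono norm_ge_zero)
    then show ?thesis
      using K x by force
  qed
  then have bdd: "bdd_above M"
    by (rule bdd_aboveI)
  have f0: "f 0 = 0"
    using f S unfolding bounded_linear_on_def by (metis scaleR_zero_left subspace_0)
  have "0 \<in> M"
    using S f0 by (force simp: M_def subspace_0)
  then show "0 \<le> onorm_on S f"
    unfolding onorm_on_def M_def[symmetric] by (rule cSup_upper2[OF _ order_refl bdd])
  assume x: "x \<in> S"
  show "norm (f x) \<le> onorm_on S f * norm x"
  proof (cases "x = 0")
    case True
    then show ?thesis using f0 by simp
  next
    case False
    have "(1 / norm x) *\<^sub>R x \<in> S"
      using S x by (simp add: subspace_scale)
    moreover have "norm ((1 / norm x) *\<^sub>R x) \<le> 1"
      using False by simp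
    ultimately have "norm (f ((1 / norm x) *\<^sub>R x)) \<le> onorm_on S f"
      unfolding onorm_on_def M_def[symmetric] by (intro cSup_upper bdd) (auto simp: M_def)
    moreover have "f ((1 / norm x) *\<^sub>R x) = (1 / norm x) *\<^sub>R f x"
      using f x unfolding bounded_linear_on_def by blast
    ultimately show ?thesis
      using False by (simp add: divide_le_eq mult.commute)
  qed
qed

lemma graves_setting_discretization:
  fixes A Ahat Ah :: "'a::banach \<Rightarrow> 'b::banach"
  assumes X: "subspace X" "closed X" and Y: "subspace Y"
    and F: "continuous_on X F" "F ` X \<subseteq> Y" and xt: "xt \<in> X"
    and Ah: "bounded_linear_on X Y Ah"
    and Ahat: "bounded_linear Ahat" "Ahat ` X \<subseteq> Y" "Ahat -` Y \<subseteq> X"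
    and A: "bounded_linear A" "open_at_rate UNIV UNIV A \<kappa>"
    and approx: "\<And>x z. x \<in> X \<inter> cball xt r \<Longrightarrow> z \<in> X \<inter> cball xt r \<Longrightarrow>
          norm (F x - F z - Ah (x - z)) \<le> c * norm (x - z)"
    and r: "0 < r" and c: "0 \<le> c"
    and small: "onorm (\<lambda>x. A x - Ahat x) + onorm_on X (\<lambda>x. Ah x - Ahat x) + c < \<kappa>"
  shows "graves_setting X Y F Ahat xt r (\<kappa> - onorm (\<lambda>x. A x - Ahat x)) (c + onorm_on X (\<lambda>x. Ah x - Ahat x))"
proof -
  interpret Ahat: bounded_linear Ahat by (rule Ahat(1))
  define \<delta>1 \<delta>2 where "\<delta>1 = onorm (\<lambda>x. A x - Ahat x)" and "\<delta>2 = onorm_on X (\<lambda>x. Ah x - Ahat x)"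
  have \<delta>1: "norm (A w - Ahat w) \<le> \<delta>1 * norm w" "0 \<le> \<delta>1" for w
    using onorm[OF bounded_linear_sub[OF A(1) Ahat(1)]] onorm_pos_le[OF bounded_linear_sub[OF A(1) Ahat(1)]]
    by (simp_all add: \<delta>1_def)
  have diff: "bounded_linear_on X Y (\<lambda>x. Ah x - Ahat x)"
    by (rule bounded_linear_on_diff[OF Ah Ahat(1,2) Y])
  have \<delta>2: "norm (Ah w - Ahat w) \<le> \<delta>2 * norm w" if "w \<in> X" for w
    using norm_le_onorm_on[OF X(1) diff that] by (simp add: \<delta>2_def)
  have "0 \<le> \<delta>2"
    using onorm_on_nonneg[OF X(1) diff] by (simp add: \<delta>2_def)
  have "open_at_rate X Y Ahat (\<kappa> - \<delta>1)"
    using open_at_rate_perturbation[OF A(2) Ahat(1) \<delta>1(1) \<delta>1(2)] small \<open>0 \<le> \<delta>2\<close> c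
      open_at_rate_restrict Ahat(3) by (simp add: \<delta>1_def \<delta>2_def)
  moreover have "norm (F x - F z - Ahat (x - z)) \<le> (c + \<delta>2) * norm (x - z)"
    if "x \<in> X \<inter> cball xt r" "z \<in> X \<inter> cball xt r" for x z
  proof -
    have "x - z \<in> X"
      using that subspace_diff[OF X(1)] by blast
    then have "norm (F x - F z - Ahat (x - z)) \<le> norm (F x - F z - Ah (x - z)) + norm (Ah (x - z) - Ahat (x - z))"
      using norm_triangle_ineq[of "F x - F z - Ah (x - z)" "Ah (x - z) - Ahat (x - z)"] by simp
    then show ?thesis
      using approx[OF that] \<delta>2[OF \<open>x - z \<in> X\<close>] by (simp add: distrib_right)
  qed
  ultimately show ?thesis
    unfolding \<delta>1_def[symmetric] \<delta>2_def[symmetric]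
    using X Y F xt r c \<open>0 \<le> \<delta>2\<close> small by unfold_locales (auto simp: \<delta>1_def \<delta>2_def)
qed

lemma discretized_zero:
  fixes A Ahat Ah :: "'a::banach \<Rightarrow> 'b::banach"
  assumes X: "subspace X" "closed X" and Y: "subspace Y"
    and F: "continuous_on X F" "F ` X \<subseteq> Y" and xt: "xt \<in> X"
    and Ah: "bounded_linear_on X Y Ah"
    and Ahat: "bounded_linear Ahat" "Ahat ` X \<subseteq> Y" "Ahat -` Y \<subseteq> X"
    and A: "bounded_linear A" "open_at_rate UNIV UNIV A (3 * c0 / 4)" and c0: "0 < c0"
    and approx: "\<And>x z. x \<in> X \<inter> cball xt r \<Longrightarrow> z \<in> X \<inter> cball xt r \<Longrightarrow>
          norm (F x - F z - Ah (x - z)) \<le> c * norm (x - z)"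
    and r: "0 < r" and c: "0 \<le> c"
    and small: "onorm (\<lambda>x. A x - Ahat x) + onorm_on X (\<lambda>x. Ah x - Ahat x) + c < c0 / 4"
    and close: "(1 + 2 / c0) * (norm (F xt) + norm (xbar - xt)) \<le> r / 4"
  shows "\<exists>xb. xb \<in> X \<and> F xb = 0 \<and>
    norm (xbar - xb) \<le> (1 + 2 / c0) * norm (xbar - xt) + 2 / c0 * norm (F xt) \<and>
    ereal (c0 / 2) \<le> sur_on X Y F xb \<and> xb \<in> cball xbar (r / 4) \<and>
    (bij A \<longrightarrow> strongly_metrically_regular_on X Y F xb \<and>
       (\<forall>x\<in>cball xbar (r / 4) \<inter> X. F x = 0 \<longrightarrow> x = xb))"
proof -
  define \<delta> where "\<delta> = onorm (\<lambda>x. A x - Ahat x)"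
  interpret graves_setting X Y F Ahat xt r "3 * c0 / 4 - \<delta>" "c + onorm_on X (\<lambda>x. Ah x - Ahat x)"
    unfolding \<delta>_def using small c0
    by (intro graves_setting_discretization[OF X Y F xt Ah Ahat A approx r c]) auto
  have gap: "c0 / 2 \<le> 3 * c0 / 4 - \<delta> - (c + onorm_on X (\<lambda>x. Ah x - Ahat x))"
    using small by (simp add: \<delta>_def)
  have "bij A \<Longrightarrow> \<forall>w\<in>X. (3 * c0 / 4 - \<delta>) * norm w \<le> norm (Ahat w)"
    using open_at_rate_lower_bound[OF A(2)] onorm[OF bounded_linear_sub[OF A(1) Ahat(1)]]
    by (intro ballI norm_lower_bound_perturbation) (auto simp: bij_def \<delta>_def)
  then show ?thesis
    using approximate_zero[OF c0 gap close] by blast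
qed

lemma eventually_at_right_0_le:
  assumes "eventually P (at_right (0::real))"
  obtains h0 where "0 < h0" "\<And>h. 0 < h \<Longrightarrow> h \<le> h0 \<Longrightarrow> P h"
proof -
  obtain b where "b > 0" "\<And>h. 0 < h \<Longrightarrow> h < b \<Longrightarrow> P h"
    using assms unfolding eventually_at_right_field by auto
  then show ?thesis
    using that[of "b / 2"] by simp
qed

lemma discretization_parameters:
  fixes c :: "real \<Rightarrow> real \<Rightarrow> real" and \<delta> e :: "real \<Rightarrow> real"
  assumes c_lim: "((\<lambda>(h, r). c h r) \<longlongrightarrow> 0) (at (0, 0) within ({0<..} \<times> {0<..}))"
    and \<delta>: "(\<delta> \<longlongrightarrow> 0) (at_right 0)" and e: "(e \<longlongrightarrow> 0) (at_right 0)"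
    and R: "0 < R" and b: "0 < b" and M: "0 < M"
  obtains r h0 where "0 < r" "r < R" "0 < h0"
    "\<And>h. 0 < h \<Longrightarrow> h \<le> h0 \<Longrightarrow> \<delta> h + c h r < b \<and> M * e h \<le> r / 4"
proof -
  have "\<forall>\<^sub>F p in at (0, 0) within ({0<..} \<times> {0<..}). dist ((\<lambda>(h, r). c h r) p) 0 < b / 2"
    using tendstoD[OF c_lim half_gt_zero[OF b]] .
  then obtain d where d: "d > 0" and dP: "\<forall>p\<in>{0<..} \<times> {0<..}. p \<noteq> (0, 0) \<and> dist p (0, 0) < d \<longrightarrow>
      dist ((\<lambda>(h, r). c h r) p) 0 < b / 2"
    unfolding eventually_at by blast
  define r where "r = min (d / 2) (R / 2)"
  have r: "0 < r" "r < R"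
    using d R by (auto simp: r_def)
  have "c h r < b / 2" if "0 < h" "h < d / 2" for h
  proof -
    have "dist (h, r) (0, 0) \<le> h + r"
      using norm_Pair_le[of h r] that r by (simp add: dist_norm)
    also have "\<dots> < d"
      using that by (simp add: r_def)
    finally have "dist (c h r) 0 < b / 2"
      using dP that r by fastforce
    then show ?thesis
      by simp
  qed
  then have "\<forall>\<^sub>F h in at_right 0. c h r < b / 2"
    unfolding eventually_at_right_field using d by (intro exI[of _ "d / 2"]) auto
  moreover have "\<forall>\<^sub>F h in at_right 0. \<delta> h < b / 2"
    using order_tendstoD(2)[OF \<delta> half_gt_zero[OF b]] .
  moreover have "\<forall>\<^sub>F h in at_right 0. M * e h < r / 4"
    using order_tendstoD(2)[OF tendsto_mult_left_zero[OF e], of "r / 4" M] r by (simp add: mult_ac)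
  ultimately have "\<forall>\<^sub>F h in at_right 0. \<delta> h + c h r < b \<and> M * e h \<le> r / 4"
    by eventually_elim auto
  then show ?thesis
    by (rule eventually_at_right_0_le) (rule that[OF r])
qed

lemma ereal_affine_bound:
  assumes "0 < c0" "x \<le> (1 + 2 / c0) * y + 2 / c0 * z"
  shows "ereal x \<le> (1 + 2 / ereal c0) * ereal y + 2 / ereal c0 * ereal z"
proof -
  have "2 / ereal c0 = ereal (2 / c0)"
    using assms(1) by (simp add: divide_ereal_def divide_inverse)
  then show ?thesis
    using assms(2) by (simp add: one_ereal_def)
qed

theorem mainTheorem3:
  fixes A :: "'a::banach \<Rightarrow> 'b::banach"
    and xbar :: 'a
    and Xh :: "real \<Rightarrow> 'a set" and Yh :: "real \<Rightarrow> 'b set"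
    and F :: "real \<Rightarrow> 'a \<Rightarrow> 'b" and xt :: "real \<Rightarrow> 'a"
    and Ah Ahat :: "real \<Rightarrow> 'a \<Rightarrow> 'b"
    and R :: real and c :: "real \<Rightarrow> real \<Rightarrow> real"
  assumes A_lin: "bounded_linear A" and A_surj: "surj A"
    and subsp: "\<And>h. h > 0 \<Longrightarrow> subspace (Xh h) \<and> closed (Xh h) \<and> subspace (Yh h) \<and> closed (Yh h)"
    and F_cont: "\<And>h. h > 0 \<Longrightarrow> continuous_on (Xh h) (F h) \<and> F h ` Xh h \<subseteq> Yh h"
    and xt_in: "\<And>h. h > 0 \<Longrightarrow> xt h \<in> Xh h"
    and eps: "((\<lambda>h. norm (F h (xt h)) + norm (xbar - xt h)) \<longlongrightarrow> 0) (at_right 0)"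
    and Ah_lin: "\<And>h. h > 0 \<Longrightarrow> bounded_linear_on (Xh h) (Yh h) (Ah h)"
    and R_pos: "R > 0"
    and c_nonneg: "\<And>h r. h > 0 \<Longrightarrow> r > 0 \<Longrightarrow> c h r \<ge> 0"
    and c_mono1: "\<And>h h' r. 0 < h \<Longrightarrow> h \<le> h' \<Longrightarrow> r > 0 \<Longrightarrow> c h r \<le> c h' r"
    and c_mono2: "\<And>h r r'. h > 0 \<Longrightarrow> 0 < r \<Longrightarrow> r \<le> r' \<Longrightarrow> c h r \<le> c h r'"
    and c_lim: "((\<lambda>(h, r). c h r) \<longlongrightarrow> 0) (at (0, 0) within ({0<..} \<times> {0<..}))"
    and approx: "\<And>h r x y. h > 0 \<Longrightarrow> 0 < r \<Longrightarrow> r < R \<Longrightarrow>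
        x \<in> Xh h \<inter> cball (xt h) r \<Longrightarrow> y \<in> Xh h \<inter> cball (xt h) r \<Longrightarrow>
        norm (F h x - F h y - Ah h (x - y)) \<le> c h r * norm (x - y)"
    and Ahat_lin: "\<And>h. h > 0 \<Longrightarrow> bounded_linear (Ahat h)"
    and Ahat_img: "\<And>h. h > 0 \<Longrightarrow> Ahat h ` Xh h \<subseteq> Yh h"
    and Ahat_pre: "\<And>h. h > 0 \<Longrightarrow> Ahat h -` Yh h \<subseteq> Xh h"
    and Ahat_lim1: "((\<lambda>h. onorm (\<lambda>x. A x - Ahat h x)) \<longlongrightarrow> 0) (at_right 0)"
    and Ahat_lim2: "((\<lambda>h. onorm_on (Xh h) (\<lambda>x. Ah h x - Ahat h x)) \<longlongrightarrow> 0) (at_right 0)"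
  shows "\<exists>h0 > 0. \<exists>xb :: real \<Rightarrow> 'a.
     (\<forall>h. 0 < h \<and> h \<le> h0 \<longrightarrow>
        xb h \<in> Xh h \<and> F h (xb h) = 0 \<and>
        ereal (norm (xbar - xb h)) \<le> (1 + 2 / banach_const A) * ereal (norm (xbar - xt h))
            + (2 / banach_const A) * ereal (norm (F h (xt h))) \<and>
        sur_on (Xh h) (Yh h) (F h) (xb h) \<ge> banach_const A / 2) \<and>
     (bij A \<longrightarrow> (\<exists>h1 r1. 0 < h1 \<and> h1 \<le> h0 \<and> r1 > 0 \<and>
        (\<forall>h. 0 < h \<and> h \<le> h1 \<longrightarrow>
           strongly_metrically_regular_on (Xh h) (Yh h) (F h) (xb h) \<and>
           xb h \<in> cball xbar r1 \<and>
           (\<forall>x \<in> cball xbar r1 \<inter> Xh h. F h x = 0 \<longrightarrow> x = xb h))))"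
proof (cases "\<exists>y::'b. y \<noteq> 0")
  case False
  then have triv: "\<And>y::'b. y = 0"
    by blast
  show ?thesis
    using xt_in trivial_target_estimates(1)[OF triv xt_in]
      trivial_target_estimates(2)[OF triv xt_in, where A = A]
      trivial_target_estimates(3)[OF triv xt_in, where A = A and xbar = xbar]
      trivial_target_strongly_regular[OF _ triv xt_in, where A = A and xbar = xbar and r = 1]
    by (intro exI[of _ 1] exI[of _ xt] conjI allI impI exI[of _ "1::real"]) simp_all
next
  case True
  obtain c0 where c0: "0 < c0" and bc: "banach_const A = ereal c0"
    using banach_const_finite[OF A_lin A_surj True] by blast
  \<comment> \<open>Any rate below the Banach constant c0 would do; 3 c0 / 4 leaves c0 / 4 for the perturbation
    of A and the linearization error, so that the discrete problems stay regular at rate c0 / 2.\<close>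
  have A_open: "open_at_rate UNIV UNIV A (3 * c0 / 4)"
    using c0 bc by (intro open_at_rate_below_banach_const bounded_linear.linear[OF A_lin] A_surj) auto
  have "0 < c0 / 4" "0 < 1 + 2 / c0"
    using c0 by (simp_all add: add_pos_pos)
  then obtain r0 h0 where r0: "0 < r0" "r0 < R" and h0: "0 < h0"
    and small: "\<And>h. 0 < h \<Longrightarrow> h \<le> h0 \<Longrightarrow>
      onorm (\<lambda>x. A x - Ahat h x) + onorm_on (Xh h) (\<lambda>x. Ah h x - Ahat h x) + c h r0 < c0 / 4 \<and>
      (1 + 2 / c0) * (norm (F h (xt h)) + norm (xbar - xt h)) \<le> r0 / 4"
    by (rule discretization_parameters[OF c_lim tendsto_add_zero[OF Ahat_lim1 Ahat_lim2] eps R_pos]) blast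
  define P where "P h x \<longleftrightarrow> x \<in> Xh h \<and> F h x = 0 \<and>
      norm (xbar - x) \<le> (1 + 2 / c0) * norm (xbar - xt h) + 2 / c0 * norm (F h (xt h)) \<and>
      ereal (c0 / 2) \<le> sur_on (Xh h) (Yh h) (F h) x \<and> x \<in> cball xbar (r0 / 4) \<and>
      (bij A \<longrightarrow> strongly_metrically_regular_on (Xh h) (Yh h) (F h) x \<and>
         (\<forall>z\<in>cball xbar (r0 / 4) \<inter> Xh h. F h z = 0 \<longrightarrow> z = x))" for h x
  have "\<exists>x. P h x" if h: "0 < h" "h \<le> h0" for h
    unfolding P_def
    by (rule discretized_zero[OF _ _ _ _ _ xt_in Ah_lin Ahat_lin Ahat_img Ahat_pre A_lin A_open c0
          approx[OF _ r0]]) (use h subsp F_cont c_nonneg[OF h(1) r0(1)] small[OF h] r0 in auto)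
  then obtain xb where xb: "\<And>h. 0 < h \<Longrightarrow> h \<le> h0 \<Longrightarrow> P h (xb h)"
    by metis
  have "banach_const A / 2 = ereal (c0 / 2)"
    using bc by simp
  then show ?thesis
    unfolding bc using h0 r0 xb ereal_affine_bound[OF c0]
    by (intro exI[of _ h0] exI[of _ xb] conjI allI impI exI[of _ "r0 / 4"]) (simp_all add: P_def)
qed

end
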